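(* Let $h:\mathbb{R}\to\mathbb{R}$ be applied entrywise, and consider the empirical risk $$\ell\big((W_j,b_j)_{j=1}^2\big)=\tfrac12\big\|W_2\,h(W_1X+b_1\mathbf{1}_3^T)+b_2\mathbf{1}_3^T-Y\big\|_F^2,$$ with $W_1\in\mathbb{R}^{2\times 2}$, $b_1\in\mathbb{R}^2$, $W_2\in\mathbb{R}^{1\times 2}$, $b_2\in\mathbb{R}$, and dataset $$X=\begin{bmatrix}1&0&\tfrac12\\0&1&\tfrac12\end{bmatrix},\qquad Y=\begin{bmatrix}0&0&1\end{bmatrix}.$$ Then: 1. If there exist $v_1,v_2,v_3,v_4\in\mathbb{R}$ such that (C2.1) $h(v_1)h(v_4)=h(v_2)h(v_3)$ and (C2.2) $h(v_1)\,h\!\left(\frac{v_3+v_4}{2}\right)\ne h(v_3)\,h\!\left(\frac{v_1+v_2}{2}\right)$, then there is a tuple $(\tilde W_j,\tilde b_j)_{j=1}^2$ at which $\ell=0$. 2. If there exist $v_1,v_2,u_1,u_2\in\mathbb{R}$ such that (C2.3) $u_1h(v_1)+u_2h(v_2)=\tfrac13$; (C2.4) $h$ is infinitely differentiable at $v_1$ and at $v_2$; (C2.5) there is a constant $c>0$ with $|h^{(n)}(v_1)|\le c^n n!$ and $|h^{(n)}(v_2)|\le c^n n!$ for all $n\ge1$; (C2.6) $(u_1h'(v_1))^2+\frac{u_1h''(v_1)}{3}>0$; (C2.7) $(u_1h'(v_1)\,u_2h'(v_2))^2<\Big((u_1h'(v_1))^2+\frac{u_1h''(v_1)}{3}\Big)\Big((u_2h'(v_2))^2+\frac{u_2h''(v_2)}{3}\Big)$,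 then there exists a tuple $(\hat W_j,\hat b_j)_{j=1}^2$ such that the output of the network equals the output of the linear least squares model (fitting $Y$ by $R\tilde X$ with $\tilde X=[X^T\ \mathbf{1}_3]^T$), the risk is $\ell((\hat W_j,\hat b_j)_{j=1}^2)=\tfrac13$, and $(\hat W_j,\hat b_j)_{j=1}^2$ is a local minimum of $\ell$.
   Context: $\mathbf{1}_3$ is the all-ones column vector in $\mathbb{R}^3$; $h^{(n)}$ denotes the $n$-th derivative of $h$, and $h'$, $h''$ the first and second derivatives. *)

theory Defs
  imports "HOL-Analysis.Analysis"
begin

text \<open>Matrices are HOL-Analysis matrices: real^'n^'m is an m-by-n matrix
 (outer index = row). Parameter tuple (W1, b1, W2, b2) with
 W1 : 2x2, b1 : 2-vector, W2 : 1x2, b2 : 1-vector (a scalar).\<close>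

type_synonym params = "(real^2^2) \<times> (real^2) \<times> (real^2^1) \<times> (real^1)"

definition Xd :: "real^3^2" where
  "Xd = (\<chi> i j. if i = 1 then (if j = 1 then 1 else if j = 2 then 0 else 1/2)
                          else (if j = 1 then 0 else if j = 2 then 1 else 1/2))"

definition Yd :: "real^3^1" where
  "Yd = (\<chi> i j. if j = 3 then 1 else 0)"

definition Xt :: "real^3^3" where
  "Xt = (\<chi> i j. if i = 1 then (if j = 1 then 1 else if j = 2 then 0 else 1/2)
          else if i = 2 then (if j = 1 then 0 else if j = 2 then 1 else 1/2)
          else 1)"

definition net_out :: "(real \<Rightarrow> real) \<Rightarrow> params \<Rightarrow> real^3^1" where
  "net_out h p = (case p of (W1, b1, W2, b2) \<Rightarrow>
      W2 ** (\<chi> i j. h ((W1 ** Xd) $ i $ j + b1 $ i)) + (\<chi> i j. b2 $ i))"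

definition frob_sq :: "real^'n^'m \<Rightarrow> real" where
  "frob_sq M = (\<Sum>i\<in>UNIV. \<Sum>j\<in>UNIV. (M $ i $ j)^2)"

definition risk :: "(real \<Rightarrow> real) \<Rightarrow> params \<Rightarrow> real" where
  "risk h p = 1/2 * frob_sq (net_out h p - Yd)"

definition lsq_risk :: "real^3^1 \<Rightarrow> real" where
  "lsq_risk R = 1/2 * frob_sq (R ** Xt - Yd)"

definition is_lsq :: "real^3^1 \<Rightarrow> bool" where
  "is_lsq R \<longleftrightarrow> (\<forall>R'. lsq_risk R \<le> lsq_risk R')"

text \<open>Local minimum in parameter space (product metric = Euclidean metric on R^9).\<close>
definition local_min :: "('a::metric_space \<Rightarrow> real) \<Rightarrow> 'a \<Rightarrow> bool" where
  "local_min f x \<longleftrightarrow> (\<exists>e>0. \<forall>y. dist y x < e \<longrightarrow> f x \<le> f y)"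

definition nderiv :: "nat \<Rightarrow> (real \<Rightarrow> real) \<Rightarrow> real \<Rightarrow> real" where
  "nderiv n h = (deriv ^^ n) h"

definition inf_diff_at :: "(real \<Rightarrow> real) \<Rightarrow> real \<Rightarrow> bool" where
  "inf_diff_at h v \<longleftrightarrow>
     (\<forall>n. \<exists>e>0. \<forall>x\<in>ball v e. \<forall>k\<le>n. nderiv k h differentiable (at x))"

end

theory Submission
  imports Defs
begin

text \<open>
  For the first claim take \<open>W1 = [v1 v2; v3 v4]\<close> and zero biases: the network outputs are
  \<open>W2\<close> applied to \<open>(h v1, h v3)\<close>, \<open>(h v2, h v4)\<close> and \<open>(h ((v1+v2)/2), h ((v3+v4)/2))\<close>.
  By (C2.1) the second vector is parallel to the first, so a \<open>W2\<close> orthogonal to the first one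
  kills both outputs, and by (C2.2) it can be scaled to make the third output 1.

  For the second claim take \<open>W1 = 0\<close>, \<open>b1 = (v1, v2)\<close>, \<open>W2 = (u1, u2)\<close>, \<open>b2 = 0\<close>: the network
  outputs the constant 1/3, which is the least squares fit. Writing the three outputs as
  \<open>m + e\<close>, \<open>m - e\<close>, \<open>m + d\<close>, one has \<open>3 \<cdot> 2\<ell> - 2 = (3m + d - 1)\<^sup>2 + 2d\<^sup>2 + 2(3e\<^sup>2 - 2d)\<close>,
  so \<open>\<ell> \<ge> 1/3\<close> whenever \<open>2d \<le> 3e\<^sup>2\<close>. Expanding \<open>h\<close> to second order around \<open>v1\<close> and \<open>v2\<close>
  (mean value theorem for \<open>e\<close>, Taylor with Lagrange remainder for \<open>d\<close>) turns \<open>3e\<^sup>2 - 2d\<close> into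
  3/4 of a quadratic form in the differences of the preactivations, whose coefficients tend to
  those of (C2.6) and (C2.7) and which is therefore positive definite near the point.
\<close>

lemma Taylor_mean_value_midpoint_ivl:
  fixes h :: "real \<Rightarrow> real"
  assumes diff: "\<forall>x\<in>{P..Q}. h differentiable (at x) \<and> deriv h differentiable (at x)"
    and "P < Q"
  obtains \<eta> s t where "\<eta> \<in> {P..Q}" "s \<in> {P..Q}" "t \<in> {P..Q}"
    "h P - h Q = deriv h \<eta> * (P - Q)"
    "h ((P + Q) / 2) - (h P + h Q) / 2 = - (deriv (deriv h) s + deriv (deriv h) t) * (P - Q)^2 / 16"
proof -
  define D where "D m = (deriv ^^ m) h" for m
  have D: "DERIV (D m) x :> D (Suc m) x" if "m < 2" "P \<le> x" "x \<le> Q" for m x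
    using diff that by (auto simp: D_def less_2_cases_iff DERIV_deriv_iff_real_differentiable)
  obtain \<eta> where \<eta>: "P < \<eta>" "\<eta> < Q" "h Q - h P = (Q - P) * deriv h \<eta>"
    using MVT2[OF \<open>P < Q\<close>, of h "D 1"] D[of 0] by (auto simp: D_def)
  define M where "M = (P + Q) / 2"
  have M: "P < M" "M < Q" using \<open>P < Q\<close> by (auto simp: M_def)
  obtain s where s: "M < s" "s < Q"
    "h Q = (\<Sum>m<2. D m M / fact m * (Q - M)^m) + D 2 s / fact 2 * (Q - M)^2"
    using Taylor_up[of 2 D h P Q M] D M by (auto simp: D_def)
  obtain t where t: "P < t" "t < M"
    "h P = (\<Sum>m<2. D m M / fact m * (P - M)^m) + D 2 t / fact 2 * (P - M)^2"
    using Taylor_down[of 2 D h P Q M] D M by (auto simp: D_def)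
  have "h M - (h P + h Q) / 2 = - (deriv (deriv h) s + deriv (deriv h) t) * (P - Q)^2 / 16"
    using s(3) t(3) by (simp add: D_def numeral_2_eq_2 M_def field_simps power2_eq_square)
  with \<eta> M s t show ?thesis
    by (intro that[of \<eta> s t]) (auto simp: M_def algebra_simps)
qed

lemma Taylor_mean_value_midpoint:
  fixes h :: "real \<Rightarrow> real"
  assumes diff: "\<forall>x\<in>closed_segment P Q. h differentiable (at x) \<and> deriv h differentiable (at x)"
  obtains \<eta> s t where "\<eta> \<in> closed_segment P Q" "s \<in> closed_segment P Q" "t \<in> closed_segment P Q"
    "h P - h Q = deriv h \<eta> * (P - Q)"
    "h ((P + Q) / 2) - (h P + h Q) / 2 = - (deriv (deriv h) s + deriv (deriv h) t) * (P - Q)^2 / 16"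
proof -
  consider "P < Q" | "P = Q" | "Q < P" by linarith
  then show ?thesis
  proof cases
    case 1
    then show ?thesis
      using Taylor_mean_value_midpoint_ivl[of P Q h] diff that
      by (auto simp: closed_segment_eq_real_ivl)
  next
    case 2
    then show ?thesis using that[of P P P] by simp
  next
    case 3
    then obtain \<eta> s t where "\<eta> \<in> {Q..P}" "s \<in> {Q..P}" "t \<in> {Q..P}"
      "h Q - h P = deriv h \<eta> * (Q - P)"
      "h ((Q + P) / 2) - (h Q + h P) / 2 = - (deriv (deriv h) s + deriv (deriv h) t) * (Q - P)^2 / 16"
      using Taylor_mean_value_midpoint_ivl[of Q P h] diff
      by (auto simp: closed_segment_eq_real_ivl)
    with 3 show ?thesis
      by (intro that[of \<eta> s t]) (auto simp: closed_segment_eq_real_ivl algebra_simps power2_commute)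
  qed
qed

lemma tendsto_closed_segment_squeeze:
  fixes f P Q :: "'a \<Rightarrow> real"
  assumes "(P \<longlongrightarrow> v) F" "(Q \<longlongrightarrow> v) F"
    and "\<forall>\<^sub>F x in F. f x \<in> closed_segment (P x) (Q x)"
  shows "(f \<longlongrightarrow> v) F"
proof (rule tendsto_sandwich)
  show "\<forall>\<^sub>F x in F. min (P x) (Q x) \<le> f x" "\<forall>\<^sub>F x in F. f x \<le> max (P x) (Q x)"
    using assms(3) by (auto elim!: eventually_mono simp: closed_segment_eq_real_ivl split: if_splits)
  show "((\<lambda>x. min (P x) (Q x)) \<longlongrightarrow> v) F" "((\<lambda>x. max (P x) (Q x)) \<longlongrightarrow> v) F"
    using tendsto_min[OF assms(1,2)] tendsto_max[OF assms(1,2)] by simp_all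
qed

lemma tendsto_Taylor_points:
  fixes h :: "real \<Rightarrow> real" and P Q :: "'a \<Rightarrow> real"
  assumes diff: "\<forall>x\<in>ball v r. h differentiable (at x) \<and> deriv h differentiable (at x)"
    and P: "(P \<longlongrightarrow> v) F" and Q: "(Q \<longlongrightarrow> v) F" and "r > 0"
  obtains \<eta> s t where "(\<eta> \<longlongrightarrow> v) F" "(s \<longlongrightarrow> v) F" "(t \<longlongrightarrow> v) F"
    "\<forall>\<^sub>F x in F. h (P x) - h (Q x) = deriv h (\<eta> x) * (P x - Q x) \<and>
       h ((P x + Q x) / 2) - (h (P x) + h (Q x)) / 2
         = - (deriv (deriv h) (s x) + deriv (deriv h) (t x)) * (P x - Q x)^2 / 16"
proof -
  define near where "near x \<longleftrightarrow> P x \<in> ball v r \<and> Q x \<in> ball v r" for x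
  define good where "good x e a b \<longleftrightarrow>
      e \<in> closed_segment (P x) (Q x) \<and> a \<in> closed_segment (P x) (Q x) \<and>
      b \<in> closed_segment (P x) (Q x) \<and> h (P x) - h (Q x) = deriv h e * (P x - Q x) \<and>
      h ((P x + Q x) / 2) - (h (P x) + h (Q x)) / 2
        = - (deriv (deriv h) a + deriv (deriv h) b) * (P x - Q x)^2 / 16" for x e a b
  have "\<exists>e a b. near x \<longrightarrow> good x e a b" for x
  proof (cases "near x")
    case True
    then have "closed_segment (P x) (Q x) \<subseteq> ball v r"
      unfolding near_def by (intro closed_segment_subset) auto
    with diff have "\<forall>y\<in>closed_segment (P x) (Q x).
        h differentiable (at y) \<and> deriv h differentiable (at y)"
      by blast
    then obtain e a b where "good x e a b"
      unfolding good_def by (rule Taylor_mean_value_midpoint) blast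
    then show ?thesis by blast
  qed simp
  then obtain \<eta> s t where pts: "\<And>x. near x \<Longrightarrow> good x (\<eta> x) (s x) (t x)"
    by metis
  have "\<forall>\<^sub>F x in F. near x"
    using tendstoD[OF P \<open>r > 0\<close>] tendstoD[OF Q \<open>r > 0\<close>]
    by eventually_elim (simp add: near_def dist_commute)
  then have ev: "\<forall>\<^sub>F x in F. good x (\<eta> x) (s x) (t x)"
    by (rule eventually_mono) (rule pts)
  show thesis
  proof (rule that)
    show "(\<eta> \<longlongrightarrow> v) F" "(s \<longlongrightarrow> v) F" "(t \<longlongrightarrow> v) F"
      using ev by (auto intro!: tendsto_closed_segment_squeeze[OF P Q]
          elim!: eventually_mono simp only: good_def)
  qed (use ev in \<open>auto elim!: eventually_mono simp only: good_def\<close>)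
qed

lemma quadratic_form_nonneg:
  fixes p1 p2 r1 r2 d1 d2 :: real
  assumes pos: "p1^2 + r1 > 0" and det: "(p1 * p2)^2 < (p1^2 + r1) * (p2^2 + r2)"
  shows "0 \<le> (p1 * d1 + p2 * d2)^2 + r1 * d1^2 + r2 * d2^2"
proof -
  let ?a = "p1^2 + r1"
  have "?a * ((p1 * d1 + p2 * d2)^2 + r1 * d1^2 + r2 * d2^2)
      = (?a * d1 + p1 * p2 * d2)^2 + (?a * (p2^2 + r2) - (p1 * p2)^2) * d2^2"
    by (simp add: algebra_simps power2_eq_square)
  also have "\<dots> \<ge> 0"
    using det by (intro add_nonneg_nonneg) auto
  finally show ?thesis
    using pos by (simp add: zero_le_mult_iff)
qed

lemma one_third_le_half_sum_squares:
  fixes y1 y2 y3 :: real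
  assumes "2 * y3 - y1 - y2 \<le> 3/4 * (y1 - y2)^2"
  shows "1/3 \<le> 1/2 * (y1^2 + y2^2 + (y3 - 1)^2)"
proof -
  define m where "m = (y1 + y2) / 2"
  define e where "e = (y1 - y2) / 2"
  define d where "d = y3 - m"
  have "3 * (y1^2 + y2^2 + (y3 - 1)^2) - 2 = (3 * m + d - 1)^2 + 2 * d^2 + 2 * (3 * e^2 - 2 * d)"
    by (simp add: m_def e_def d_def field_simps power2_eq_square)
  moreover have "2 * d \<le> 3 * e^2"
    using assms by (simp add: m_def e_def d_def power2_eq_square field_simps)
  ultimately have "0 \<le> 3 * (y1^2 + y2^2 + (y3 - 1)^2) - 2"
    by simp
  then show ?thesis
    by simp
qed

lemma tendsto_neuron_Taylor_coefficients:
  fixes h :: "real \<Rightarrow> real" and P Q w :: "'a \<Rightarrow> real"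
  assumes diff: "\<forall>x\<in>ball v r. h differentiable (at x) \<and> deriv h differentiable (at x)" "r > 0"
    and cont: "isCont (deriv (deriv h)) v"
    and P: "(P \<longlongrightarrow> v) F" and Q: "(Q \<longlongrightarrow> v) F" and w: "(w \<longlongrightarrow> u) F"
  obtains p q where "(p \<longlongrightarrow> u * deriv h v) F" "(q \<longlongrightarrow> u * deriv (deriv h) v / 3) F"
    "\<forall>\<^sub>F x in F. w x * (h (P x) - h (Q x)) = p x * (P x - Q x) \<and>
       w x * (h ((P x + Q x) / 2) - (h (P x) + h (Q x)) / 2) = - 3/8 * q x * (P x - Q x)^2"
proof -
  obtain \<eta> s t where \<eta>: "(\<eta> \<longlongrightarrow> v) F" and s: "(s \<longlongrightarrow> v) F" and t: "(t \<longlongrightarrow> v) F"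
    and ev: "\<forall>\<^sub>F x in F. h (P x) - h (Q x) = deriv h (\<eta> x) * (P x - Q x) \<and>
       h ((P x + Q x) / 2) - (h (P x) + h (Q x)) / 2
         = - (deriv (deriv h) (s x) + deriv (deriv h) (t x)) * (P x - Q x)^2 / 16"
    using tendsto_Taylor_points[OF diff(1) P Q diff(2)] by blast
  have "isCont (deriv h) v"
    using diff by (auto intro: differentiable_imp_continuous_within)
  show thesis
  proof (rule that)
    show "((\<lambda>x. w x * deriv h (\<eta> x)) \<longlongrightarrow> u * deriv h v) F"
      by (intro tendsto_mult w isCont_tendsto_compose[OF \<open>isCont (deriv h) v\<close> \<eta>])
    have "((\<lambda>x. w x * (deriv (deriv h) (s x) + deriv (deriv h) (t x)) / 6)
        \<longlongrightarrow> u * (deriv (deriv h) v + deriv (deriv h) v) / 6) F"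
      by (intro tendsto_intros w isCont_tendsto_compose[OF cont s] isCont_tendsto_compose[OF cont t]) simp
    then show "((\<lambda>x. w x * (deriv (deriv h) (s x) + deriv (deriv h) (t x)) / 6)
        \<longlongrightarrow> u * deriv (deriv h) v / 3) F"
      by simp
    show "\<forall>\<^sub>F x in F. w x * (h (P x) - h (Q x)) = w x * deriv h (\<eta> x) * (P x - Q x) \<and>
       w x * (h ((P x + Q x) / 2) - (h (P x) + h (Q x)) / 2)
         = - 3/8 * (w x * (deriv (deriv h) (s x) + deriv (deriv h) (t x)) / 6) * (P x - Q x)^2"
      using ev
    proof eventually_elim
      case (elim x)
      then have mv: "w x * (h (P x) - h (Q x)) = w x * deriv h (\<eta> x) * (P x - Q x)"
        and mid: "w x * (h ((P x + Q x) / 2) - (h (P x) + h (Q x)) / 2)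
          = w x * (- (deriv (deriv h) (s x) + deriv (deriv h) (t x)) * (P x - Q x)^2 / 16)"
        by simp_all
      show ?case
        by (intro conjI mv) (subst mid, simp add: field_simps)
    qed
  qed
qed

lemma eventually_one_third_le_two_neuron_risk:
  fixes h :: "real \<Rightarrow> real" and P1 Q1 P2 Q2 w1 w2 :: "'a \<Rightarrow> real"
  assumes diff1: "\<forall>x\<in>ball v1 r1. h differentiable (at x) \<and> deriv h differentiable (at x)" "r1 > 0"
    and diff2: "\<forall>x\<in>ball v2 r2. h differentiable (at x) \<and> deriv h differentiable (at x)" "r2 > 0"
    and cont: "isCont (deriv (deriv h)) v1" "isCont (deriv (deriv h)) v2"
    and lim1: "(P1 \<longlongrightarrow> v1) F" "(Q1 \<longlongrightarrow> v1) F" "(w1 \<longlongrightarrow> u1) F"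
    and lim2: "(P2 \<longlongrightarrow> v2) F" "(Q2 \<longlongrightarrow> v2) F" "(w2 \<longlongrightarrow> u2) F"
    and pos: "(u1 * deriv h v1)^2 + u1 * deriv (deriv h) v1 / 3 > 0"
    and det: "(u1 * deriv h v1 * (u2 * deriv h v2))^2 <
          ((u1 * deriv h v1)^2 + u1 * deriv (deriv h) v1 / 3) *
          ((u2 * deriv h v2)^2 + u2 * deriv (deriv h) v2 / 3)"
  shows "\<forall>\<^sub>F x in F. \<forall>b. 1/3 \<le> 1/2 * (
      (w1 x * h (P1 x) + w2 x * h (P2 x) + b)^2 + (w1 x * h (Q1 x) + w2 x * h (Q2 x) + b)^2 +
      (w1 x * h ((P1 x + Q1 x) / 2) + w2 x * h ((P2 x + Q2 x) / 2) + b - 1)^2)"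
proof -
  obtain p1 q1 where p1: "(p1 \<longlongrightarrow> u1 * deriv h v1) F" and q1: "(q1 \<longlongrightarrow> u1 * deriv (deriv h) v1 / 3) F"
    and ev1: "\<forall>\<^sub>F x in F. w1 x * (h (P1 x) - h (Q1 x)) = p1 x * (P1 x - Q1 x) \<and>
       w1 x * (h ((P1 x + Q1 x) / 2) - (h (P1 x) + h (Q1 x)) / 2) = - 3/8 * q1 x * (P1 x - Q1 x)^2"
    using tendsto_neuron_Taylor_coefficients[OF diff1 cont(1) lim1] by blast
  obtain p2 q2 where p2: "(p2 \<longlongrightarrow> u2 * deriv h v2) F" and q2: "(q2 \<longlongrightarrow> u2 * deriv (deriv h) v2 / 3) F"
    and ev2: "\<forall>\<^sub>F x in F. w2 x * (h (P2 x) - h (Q2 x)) = p2 x * (P2 x - Q2 x) \<and>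
       w2 x * (h ((P2 x + Q2 x) / 2) - (h (P2 x) + h (Q2 x)) / 2) = - 3/8 * q2 x * (P2 x - Q2 x)^2"
    using tendsto_neuron_Taylor_coefficients[OF diff2 cont(2) lim2] by blast
  have "\<forall>\<^sub>F x in F. (p1 x)^2 + q1 x > 0"
    using pos by (intro order_tendstoD(1)[OF tendsto_add[OF tendsto_power[OF p1] q1]])
  moreover have "\<forall>\<^sub>F x in F. (p1 x * p2 x)^2 < ((p1 x)^2 + q1 x) * ((p2 x)^2 + q2 x)"
  proof -
    have "\<forall>\<^sub>F x in F. 0 < ((p1 x)^2 + q1 x) * ((p2 x)^2 + q2 x) - (p1 x * p2 x)^2"
    proof (rule order_tendstoD(1))
      show "((\<lambda>x. ((p1 x)^2 + q1 x) * ((p2 x)^2 + q2 x) - (p1 x * p2 x)^2) \<longlongrightarrow>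
         ((u1 * deriv h v1)^2 + u1 * deriv (deriv h) v1 / 3) *
         ((u2 * deriv h v2)^2 + u2 * deriv (deriv h) v2 / 3) - (u1 * deriv h v1 * (u2 * deriv h v2))^2) F"
        by (intro tendsto_intros p1 p2 q1 q2)
    qed (use det in simp)
    then show ?thesis by simp
  qed
  ultimately show ?thesis
    using ev1 ev2
  proof eventually_elim
    case (elim x)
    let ?d1 = "P1 x - Q1 x" and ?d2 = "P2 x - Q2 x"
    have form: "0 \<le> (p1 x * ?d1 + p2 x * ?d2)^2 + q1 x * ?d1^2 + q2 x * ?d2^2"
      using elim by (intro quadratic_form_nonneg) auto
    show ?case
    proof
      fix b
      define y1 where "y1 = w1 x * h (P1 x) + w2 x * h (P2 x) + b"
      define y2 where "y2 = w1 x * h (Q1 x) + w2 x * h (Q2 x) + b"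
      define y3 where "y3 = w1 x * h ((P1 x + Q1 x) / 2) + w2 x * h ((P2 x + Q2 x) / 2) + b"
      have diff: "y1 - y2 = p1 x * ?d1 + p2 x * ?d2"
        using elim by (simp add: y1_def y2_def algebra_simps)
      have defect: "2 * y3 - y1 - y2 = - 3/4 * (q1 x * ?d1^2 + q2 x * ?d2^2)"
        using elim by (simp add: y1_def y2_def y3_def field_simps)
      have "2 * y3 - y1 - y2 \<le> 3/4 * (y1 - y2)^2"
        unfolding diff defect using form by (simp add: algebra_simps)
      then show "1/3 \<le> 1/2 * (y1^2 + y2^2 + (y3 - 1)^2)"
        by (rule one_third_le_half_sum_squares)
    qed
  qed
qed

lemma risk_eq:
  "risk h (W1, b1, W2, b2) = 1/2 * (
     (W2$1$1 * h (W1$1$1 + b1$1) + W2$1$2 * h (W1$2$1 + b1$2) + b2$1)^2 +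
     (W2$1$1 * h (W1$1$2 + b1$1) + W2$1$2 * h (W1$2$2 + b1$2) + b2$1)^2 +
     (W2$1$1 * h ((W1$1$1 + b1$1 + (W1$1$2 + b1$1)) / 2) +
      W2$1$2 * h ((W1$2$1 + b1$2 + (W1$2$2 + b1$2)) / 2) + b2$1 - 1)^2)"
  unfolding risk_def frob_sq_def net_out_def matrix_matrix_mult_def Xd_def Yd_def
  by (simp add: sum_2 sum_3 field_simps)

lemma lsq_risk_eq:
  "lsq_risk R = 1/2 * ((R$1$1 + R$1$3)^2 + (R$1$2 + R$1$3)^2 + ((R$1$1 + R$1$2) / 2 + R$1$3 - 1)^2)"
  unfolding lsq_risk_def frob_sq_def matrix_matrix_mult_def Xt_def Yd_def
  by (simp add: sum_2 sum_3 field_simps)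

lemma is_lsq_constant_one_third: "is_lsq (\<chi> i j. if j = 3 then 1/3 else 0)"
  unfolding is_lsq_def
proof
  fix R :: "real^3^1"
  have "1/3 \<le> lsq_risk R"
    unfolding lsq_risk_eq
    by (rule one_third_le_half_sum_squares) (simp add: algebra_simps)
  moreover have "lsq_risk (\<chi> i j. if j = 3 then 1/3 else 0) = 1/3"
    unfolding lsq_risk_eq by (simp add: power2_eq_square)
  ultimately show "lsq_risk (\<chi> i j. if j = 3 then 1/3 else 0) \<le> lsq_risk R"
    by simp
qed

lemma risk_zero_if_interpolating:
  fixes h :: "real \<Rightarrow> real"
  assumes "h v1 * h v4 = h v2 * h v3"
    and "h v1 * h ((v3 + v4) / 2) \<noteq> h v3 * h ((v1 + v2) / 2)"
  shows "\<exists>p. risk h p = 0"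
proof -
  define K where "K = h v3 * h ((v1 + v2) / 2) - h v1 * h ((v3 + v4) / 2)"
  have "K \<noteq> 0"
    using assms(2) by (simp add: K_def)
  define W1 :: "real^2^2" where
    "W1 = (\<chi> i j. if i = 1 then (if j = 1 then v1 else v2) else (if j = 1 then v3 else v4))"
  define W2 :: "real^2^1" where "W2 = (\<chi> i j. if j = 1 then h v3 / K else - h v1 / K)"
  have "h v3 / K * h v2 - h v1 / K * h v4 = 0"
    using assms(1) by (simp add: field_simps)
  moreover have "h v3 / K * h ((v1 + v2) / 2) - h v1 / K * h ((v3 + v4) / 2) = 1"
    using \<open>K \<noteq> 0\<close> unfolding K_def by (simp add: diff_divide_distrib[symmetric])
  ultimately have "risk h (W1, 0, W2, 0) = 0"
    unfolding risk_eq W1_def W2_def by (simp add: field_simps)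
  then show ?thesis
    by blast
qed

lemma inf_diff_at_twice_differentiable_near:
  assumes "inf_diff_at h v"
  obtains r where "r > 0" "\<forall>x\<in>ball v r. h differentiable (at x) \<and> deriv h differentiable (at x)"
    "isCont (deriv (deriv h)) v"
proof -
  obtain r where "r > 0" and diff: "\<forall>x\<in>ball v r. \<forall>k\<le>2. nderiv k h differentiable (at x)"
    using assms unfolding inf_diff_at_def by blast
  then have "h differentiable (at x)" "deriv h differentiable (at x)"
    "deriv (deriv h) differentiable (at x)" if "x \<in> ball v r" for x
    using that diff[rule_format, OF that, of 0] diff[rule_format, OF that, of 1]
      diff[rule_format, OF that, of 2]
    by (simp_all add: nderiv_def numeral_2_eq_2)
  with \<open>r > 0\<close> show thesis
    by (intro that[of r]) (auto intro: differentiable_imp_continuous_within)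
qed

lemma local_min_at_least_squares_fit:
  fixes h :: "real \<Rightarrow> real"
  assumes fit: "u1 * h v1 + u2 * h v2 = 1/3"
    and d1: "inf_diff_at h v1" and d2: "inf_diff_at h v2"
    and pos: "(u1 * deriv h v1)^2 + u1 * deriv (deriv h) v1 / 3 > 0"
    and det: "(u1 * deriv h v1 * (u2 * deriv h v2))^2 <
          ((u1 * deriv h v1)^2 + u1 * deriv (deriv h) v1 / 3) *
          ((u2 * deriv h v2)^2 + u2 * deriv (deriv h) v2 / 3)"
  shows "\<exists>p. (\<exists>R. is_lsq R \<and> net_out h p = R ** Xt) \<and> risk h p = 1/3 \<and> local_min (risk h) p"
proof -
  obtain r1 where r1: "r1 > 0" "\<forall>x\<in>ball v1 r1. h differentiable (at x) \<and> deriv h differentiable (at x)"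
    "isCont (deriv (deriv h)) v1"
    using inf_diff_at_twice_differentiable_near[OF d1] by blast
  obtain r2 where r2: "r2 > 0" "\<forall>x\<in>ball v2 r2. h differentiable (at x) \<and> deriv h differentiable (at x)"
    "isCont (deriv (deriv h)) v2"
    using inf_diff_at_twice_differentiable_near[OF d2] by blast
  define p :: params where
    "p = (0, (\<chi> i. if i = 1 then v1 else v2), (\<chi> i j. if j = 1 then u1 else u2), 0)"
  have lim: "(f \<longlongrightarrow> f p) (nhds p)" if "isCont f p" for f :: "params \<Rightarrow> real"
    using that by (simp add: isCont_def tendsto_at_iff_tendsto_nhds)
  have pre: "((\<lambda>q. fst q $ i $ j + fst (snd q) $ i) \<longlongrightarrow> (if i = 1 then v1 else v2)) (nhds p)" for i j
    using lim[of "\<lambda>q. fst q $ i $ j + fst (snd q) $ i"] by (simp add: p_def)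
  have wt: "((\<lambda>q. fst (snd (snd q)) $ 1 $ j) \<longlongrightarrow> (if j = 1 then u1 else u2)) (nhds p)" for j
    using lim[of "\<lambda>q. fst (snd (snd q)) $ 1 $ j"] by (simp add: p_def)
  have "\<forall>\<^sub>F q in nhds p. \<forall>b. 1/3 \<le> 1/2 * (
      (fst (snd (snd q)) $ 1 $ 1 * h (fst q $ 1 $ 1 + fst (snd q) $ 1) +
       fst (snd (snd q)) $ 1 $ 2 * h (fst q $ 2 $ 1 + fst (snd q) $ 2) + b)^2 +
      (fst (snd (snd q)) $ 1 $ 1 * h (fst q $ 1 $ 2 + fst (snd q) $ 1) +
       fst (snd (snd q)) $ 1 $ 2 * h (fst q $ 2 $ 2 + fst (snd q) $ 2) + b)^2 +
      (fst (snd (snd q)) $ 1 $ 1 * h ((fst q $ 1 $ 1 + fst (snd q) $ 1 + (fst q $ 1 $ 2 + fst (snd q) $ 1)) / 2) +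
       fst (snd (snd q)) $ 1 $ 2 * h ((fst q $ 2 $ 1 + fst (snd q) $ 2 + (fst q $ 2 $ 2 + fst (snd q) $ 2)) / 2)
       + b - 1)^2)"
    using eventually_one_third_le_two_neuron_risk[OF r1(2,1) r2(2,1) r1(3) r2(3)
        pre[of 1 1, simplified] pre[of 1 2, simplified] wt[of 1, simplified]
        pre[of 2 1, simplified] pre[of 2 2, simplified] wt[of 2, simplified]] pos det
    by simp
  then have "\<forall>\<^sub>F q in nhds p. 1/3 \<le> risk h q"
    by eventually_elim (auto simp: risk_eq split: prod.splits)
  then obtain e where "e > 0" "\<forall>q. dist q p < e \<longrightarrow> 1/3 \<le> risk h q"
    unfolding eventually_nhds_metric by blast
  moreover have "risk h p = 1/3"
    unfolding p_def risk_eq by (simp add: fit power2_eq_square)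
  ultimately have "local_min (risk h) p"
    unfolding local_min_def by metis
  moreover have "net_out h p = (\<chi> i j. if j = 3 then 1/3 else 0) ** Xt"
    unfolding net_out_def p_def matrix_matrix_mult_def Xd_def Xt_def
    using fit by (simp add: sum_2 sum_3 vec_eq_iff)
  ultimately show ?thesis
    using is_lsq_constant_one_third \<open>risk h p = 1/3\<close> by blast
qed

theorem theorem2:
  fixes h :: "real \<Rightarrow> real"
  shows
   "((\<exists>v1 v2 v3 v4 :: real.
        h v1 * h v4 = h v2 * h v3 \<and>
        h v1 * h ((v3 + v4) / 2) \<noteq> h v3 * h ((v1 + v2) / 2))
      \<longrightarrow> (\<exists>p. risk h p = 0))
    \<and>
    ((\<exists>v1 v2 u1 u2 :: real.
        u1 * h v1 + u2 * h v2 = 1/3 \<and>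
        inf_diff_at h v1 \<and> inf_diff_at h v2 \<and>
        (\<exists>c>0. \<forall>n\<ge>1. \<bar>nderiv n h v1\<bar> \<le> c ^ n * fact n \<and>
                        \<bar>nderiv n h v2\<bar> \<le> c ^ n * fact n) \<and>
        (u1 * deriv h v1)^2 + u1 * deriv (deriv h) v1 / 3 > 0 \<and>
        (u1 * deriv h v1 * (u2 * deriv h v2))^2 <
          ((u1 * deriv h v1)^2 + u1 * deriv (deriv h) v1 / 3) *
          ((u2 * deriv h v2)^2 + u2 * deriv (deriv h) v2 / 3))
      \<longrightarrow> (\<exists>p. (\<exists>R. is_lsq R \<and> net_out h p = R ** Xt) \<and>
               risk h p = 1/3 \<and> local_min (risk h) p))"
  using risk_zero_if_interpolating local_min_at_least_squares_fit by blast

end
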